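(* Let $\mathsf{C}=\mathsf{C}_D\circ\cdots\circ\mathsf{C}_1$ be a depth-$D$ Clifford circuit. Then there is a circuit $\tilde{\mathsf{C}}=\tilde{\mathsf{C}}_{2D}\circ\cdots\circ\tilde{\mathsf{C}}_1$ of depth $2D$ such that: (i) each operation layer $\tilde{\mathsf{C}}_t$ with odd $t$ consists only of state preparations (of $|0\rangle$), single-qubit measurements and identities; (ii) each operation layer $\tilde{\mathsf{C}}_t$ with even $t$ consists only of one- and two-qubit unitaries. Moreover $\tilde{\mathsf{C}}\gtrsim\mathsf{C}$.
   Context: A Clifford circuit of depth $D$ on $n$ qubits is a composition of $D$ layers, each a tensor product of operations on disjoint qubit sets: preparation of $|0\rangle$, one- and two-qubit Clifford unitaries (including identity), single-qubit computational-basis measurements (and possibly classically controlled Paulis). Local stochastic Pauli noise of strength $p$: a random function $F$ from wires $[D]\times[n]$ to single-qubit Paulis with $\Pr[W\subseteq\mathrm{supp}(F)]\le p^{|W|}$ for all $W$; $F\bowtie\mathsf{C}$ applies $F(t,j)$ to qubit $j$ after layer $t$. $\tilde{\mathsf{C}}\gtrsim\mathsf{C}$ means: there are positive constants $\Lambda,\lambda$ such that for every $\tilde p\in[0,1]$ and every local stochastic Pauli noise $\tilde F$ of strength $\tilde p$ on $\tilde{\mathsf{C}}$ there is local stochastic Pauli noise $F$ of strength $\Lambda\tilde p^\lambda$ on $\mathsf{C}$ with $F\bowtie\mathsf{C}=\tilde F\bowtie\tilde{\mathsf{C}}$. *)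

theory Defs
  imports "HOL-Probability.Probability"
begin

text \<open>Convention: False = |0>, True = |1>. An n-qubit operator/density matrix is a
  function on bit lists of length n (entries outside are irrelevant).\<close>

type_synonym mat = "bool list \<Rightarrow> bool list \<Rightarrow> complex"
type_synonym cq = "bool list \<Rightarrow> mat"  \<comment> \<open>classical record \<Rightarrow> unnormalised density matrix\<close>

definition basis :: "nat \<Rightarrow> bool list set" where
  "basis n = {xs. length xs = n}"

definition conj_by :: "nat \<Rightarrow> mat \<Rightarrow> mat \<Rightarrow> mat" where
  "conj_by n M \<rho> = (\<lambda>x y. \<Sum>a\<in>basis n. \<Sum>b\<in>basis n. M x a * \<rho> a b * cnj (M y b))"

datatype pauli = PI | PX | PY | PZ

definition pmat :: "pauli \<Rightarrow> bool \<Rightarrow> bool \<Rightarrow> complex" where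
  "pmat P a b = (case P of
      PI \<Rightarrow> (if a = b then 1 else 0)
    | PX \<Rightarrow> (if a \<noteq> b then 1 else 0)
    | PY \<Rightarrow> (if a \<noteq> b then (if a then \<i> else - \<i>) else 0)
    | PZ \<Rightarrow> (if a = b then (if a then -1 else 1) else 0))"

definition pstr :: "pauli list \<Rightarrow> mat" where
  "pstr ps = (\<lambda>x y. \<Prod>i<length ps. pmat (ps!i) (x!i) (y!i))"

definition unitary_mat :: "nat \<Rightarrow> mat \<Rightarrow> bool" where
  "unitary_mat m U \<longleftrightarrow> (\<forall>x\<in>basis m. \<forall>y\<in>basis m.
      (\<Sum>k\<in>basis m. cnj (U k x) * U k y) = (if x = y then 1 else 0))"

definition clifford_mat :: "nat \<Rightarrow> mat \<Rightarrow> bool" where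
  "clifford_mat m U \<longleftrightarrow> unitary_mat m U \<and>
     (\<forall>ps. length ps = m \<longrightarrow> (\<exists>qs c. length qs = m \<and>
        (\<forall>x\<in>basis m. \<forall>y\<in>basis m. conj_by m U (pstr ps) x y = c * pstr qs x y)))"

definition lift :: "nat \<Rightarrow> nat list \<Rightarrow> mat \<Rightarrow> mat" where
  "lift n qs U = (\<lambda>x a. if (\<forall>i<n. i \<notin> set qs \<longrightarrow> x!i = a!i)
                        then U (map (\<lambda>i. x!i) qs) (map (\<lambda>i. a!i) qs) else 0)"

definition ket_bra :: "bool \<Rightarrow> bool \<Rightarrow> mat" where
  "ket_bra a b = (\<lambda>x y. if x = [a] \<and> y = [b] then 1 else 0)"

text \<open>Operations: preparation of |0> (reset), computational-basis measurement,
  a one- or two-qubit unitary gate on an ordered list of qubits, and a Pauli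
  on a qubit controlled by a classical function of the measurement record
  obtained before the current layer.\<close>
datatype op = Prep nat | Meas nat | Gate "nat list" mat | CPauli nat pauli "bool list \<Rightarrow> bool"

type_synonym layer = "op list"
type_synonym circuit = "layer list"   \<comment> \<open>first layer first; depth = length\<close>

fun op_qubits :: "op \<Rightarrow> nat list" where
  "op_qubits (Prep j) = [j]"
| "op_qubits (Meas j) = [j]"
| "op_qubits (Gate qs U) = qs"
| "op_qubits (CPauli j P c) = [j]"

fun wf_op :: "nat \<Rightarrow> op \<Rightarrow> bool" where
  "wf_op n (Gate qs U) = ((\<forall>q\<in>set qs. q < n) \<and> (length qs = 1 \<or> length qs = 2)
                          \<and> clifford_mat (length qs) U)"
| "wf_op n o' = (\<forall>q\<in>set (op_qubits o'). q < n)"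

definition wf_layer :: "nat \<Rightarrow> layer \<Rightarrow> bool" where
  "wf_layer n L \<longleftrightarrow> (\<forall>o'\<in>set L. wf_op n o') \<and> distinct (concat (map op_qubits L))"

definition clifford_circuit :: "nat \<Rightarrow> circuit \<Rightarrow> bool" where
  "clifford_circuit n C \<longleftrightarrow> (\<forall>L\<in>set C. wf_layer n L)"

fun is_unitary_op :: "op \<Rightarrow> bool" where
  "is_unitary_op (Gate qs U) = True"
| "is_unitary_op (CPauli j P c) = True"
| "is_unitary_op _ = False"

fun is_prep :: "op \<Rightarrow> bool" where
  "is_prep (Prep j) = True" | "is_prep _ = False"

fun is_meas :: "op \<Rightarrow> bool" where
  "is_meas (Meas j) = True" | "is_meas _ = False"

fun prep_meas_id_op :: "op \<Rightarrow> bool" where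
  "prep_meas_id_op (Prep j) = True"
| "prep_meas_id_op (Meas j) = True"
| "prep_meas_id_op (Gate qs U) = (length qs = 1 \<and>
      (\<forall>x\<in>basis 1. \<forall>y\<in>basis 1. U x y = (if x = y then 1 else 0)))"
| "prep_meas_id_op (CPauli j P c) = False"

definition prep_meas_layer :: "layer \<Rightarrow> bool" where
  "prep_meas_layer L \<longleftrightarrow> (\<forall>o'\<in>set L. prep_meas_id_op o')"

definition unitary_layer :: "layer \<Rightarrow> bool" where
  "unitary_layer L \<longleftrightarrow> (\<forall>o'\<in>set L. is_unitary_op o')"

definition apply_unitary :: "nat \<Rightarrow> mat \<Rightarrow> cq \<Rightarrow> cq" where
  "apply_unitary n M \<sigma> = (\<lambda>r. conj_by n M (\<sigma> r))"

definition apply_prep :: "nat \<Rightarrow> nat \<Rightarrow> cq \<Rightarrow> cq" where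
  "apply_prep n j \<sigma> = (\<lambda>r x y.
      conj_by n (lift n [j] (ket_bra False False)) (\<sigma> r) x y
    + conj_by n (lift n [j] (ket_bra False True)) (\<sigma> r) x y)"

text \<open>Measurement appends its outcome to the classical record.\<close>
definition apply_meas :: "nat \<Rightarrow> nat \<Rightarrow> cq \<Rightarrow> cq" where
  "apply_meas n j \<sigma> = (\<lambda>r. if r = [] then (\<lambda>x y. 0)
      else conj_by n (lift n [j] (ket_bra (last r) (last r))) (\<sigma> (butlast r)))"

fun apply_op :: "nat \<Rightarrow> op \<Rightarrow> cq \<Rightarrow> cq" where
  "apply_op n (Prep j) \<sigma> = apply_prep n j \<sigma>"
| "apply_op n (Meas j) \<sigma> = apply_meas n j \<sigma>"
| "apply_op n (Gate qs U) \<sigma> = apply_unitary n (lift n qs U) \<sigma>"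
| "apply_op n (CPauli j P c) \<sigma> =
     (\<lambda>r. if c r then conj_by n (lift n [j] (pstr [P])) (\<sigma> r) else \<sigma> r)"

text \<open>Operations of a layer act on disjoint qubits; unitaries (incl. classically
  controlled Paulis, which see only earlier layers' outcomes) are applied first,
  then preparations, then measurements (outcomes recorded in list order).\<close>
definition layer_sem :: "nat \<Rightarrow> layer \<Rightarrow> cq \<Rightarrow> cq" where
  "layer_sem n L = fold (apply_op n)
     (filter is_unitary_op L @ filter is_prep L @ filter is_meas L)"

type_synonym noise = "nat \<times> nat \<Rightarrow> pauli"  \<comment> \<open>wire (layer t, qubit j), 0-indexed\<close>

definition noise_layer :: "nat \<Rightarrow> noise \<Rightarrow> nat \<Rightarrow> cq \<Rightarrow> cq" where
  "noise_layer n f t = fold (\<lambda>j. apply_unitary n (lift n [j] (pstr [f (t, j)]))) [0..<n]"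

fun run :: "nat \<Rightarrow> circuit \<Rightarrow> noise \<Rightarrow> nat \<Rightarrow> cq \<Rightarrow> cq" where
  "run n [] f t \<sigma> = \<sigma>"
| "run n (L # Ls) f t \<sigma> = run n Ls f (Suc t) (noise_layer n f t (layer_sem n L \<sigma>))"

definition noisy_sem :: "nat \<Rightarrow> circuit \<Rightarrow> noise \<Rightarrow> mat \<Rightarrow> cq" where
  "noisy_sem n C f \<rho> = run n C f 0 (\<lambda>r. if r = [] then \<rho> else (\<lambda>x y. 0))"

definition supp :: "noise \<Rightarrow> (nat \<times> nat) set" where
  "supp f = {w. f w \<noteq> PI}"

definition local_stochastic :: "nat \<Rightarrow> nat \<Rightarrow> real \<Rightarrow> noise pmf \<Rightarrow> bool" where
  "local_stochastic D n p F \<longleftrightarrow>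
     (\<forall>W. W \<subseteq> {..<D} \<times> {..<n} \<longrightarrow> measure_pmf.prob F {f. W \<subseteq> supp f} \<le> p ^ card W)"

definition simulates :: "nat \<Rightarrow> circuit \<Rightarrow> circuit \<Rightarrow> bool" where
  "simulates n Ct C \<longleftrightarrow> (\<exists>\<Lambda>::real. \<exists>lam::real. \<Lambda> > 0 \<and> lam > 0 \<and>
     (\<forall>pt::real. 0 \<le> pt \<and> pt \<le> 1 \<longrightarrow> (\<forall>Ft. local_stochastic (length Ct) n pt Ft \<longrightarrow>
        (\<exists>F. local_stochastic (length C) n (\<Lambda> * pt powr lam) F \<and>
             map_pmf (noisy_sem n C) F = map_pmf (noisy_sem n Ct) Ft))))"

end

theory Submission
  imports Defs
begin

text \<open>Every layer of \<open>C\<close> is split into its preparations and measurements, followed by its unitaries.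
  The operations of a layer act on disjoint qubits and therefore commute; a classically controlled Pauli
  moved behind \<open>k\<close> measurements is made to ignore the \<open>k\<close> outcomes they record. Noise after a
  preparation/measurement layer of the new circuit is pushed through the following Clifford unitaries:
  it stays a Pauli operator (up to a phase, which does not change the channel) and spreads only over the
  qubits of a gate. Merged with the noise after the unitary layer it becomes noise on the corresponding
  layer of \<open>C\<close>. Each wire of \<open>C\<close> then depends on at most 3 wires of the new circuit and each wire of the
  new circuit affects at most 2 wires of \<open>C\<close>, so a union bound gives strength \<open>3 p powr (1/2)\<close>.\<close>

lemma mem_basis_iff [simp]: "xs \<in> basis n \<longleftrightarrow> length xs = n"
  by (simp add: basis_def)

lemma finite_basis [simp]: "finite (basis n)"
  unfolding basis_def using finite_lists_length_eq[of "UNIV :: bool set" n] by simp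

lemma basis_Suc: "basis (Suc n) = Cons False ` basis n \<union> Cons True ` basis n"
proof
  show "basis (Suc n) \<subseteq> Cons False ` basis n \<union> Cons True ` basis n"
  proof
    fix x assume "x \<in> basis (Suc n)"
    then obtain b xs where "x = b # xs" "length xs = n" by (cases x) auto
    then show "x \<in> Cons False ` basis n \<union> Cons True ` basis n" by (cases b) auto
  qed
qed auto

lemma sum_basis_prod:
  "(\<Sum>a\<in>basis n. \<Prod>i<n. f i (a ! i)) = (\<Prod>i<n. f i False + f i True :: complex)"
proof (induction n arbitrary: f)
  case 0
  have "basis 0 = {[]}" by (auto simp: basis_def)
  then show ?case by simp
next
  case (Suc n)
  have disj: "Cons False ` basis n \<inter> Cons True ` basis n = {}" by auto
  have "(\<Sum>a\<in>basis (Suc n). \<Prod>i<Suc n. f i (a ! i))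
     = (\<Sum>a\<in>Cons False ` basis n. \<Prod>i<Suc n. f i (a ! i))
       + (\<Sum>a\<in>Cons True ` basis n. \<Prod>i<Suc n. f i (a ! i))"
    unfolding basis_Suc by (rule sum.union_disjoint) (simp_all add: disj)
  also have "\<dots> = (\<Sum>a\<in>basis n. f 0 False * (\<Prod>i<n. f (Suc i) (a ! i)))
                 + (\<Sum>a\<in>basis n. f 0 True * (\<Prod>i<n. f (Suc i) (a ! i)))"
    by (simp add: sum.reindex prod.lessThan_Suc_shift del: prod.lessThan_Suc)
  also have "\<dots> = (f 0 False + f 0 True) * (\<Prod>i<n. f (Suc i) False + f (Suc i) True)"
    by (simp add: sum_distrib_left[symmetric] Suc.IH[of "\<lambda>i. f (Suc i)"] distrib_right)
  also have "\<dots> = (\<Prod>i<Suc n. f i False + f i True)"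
    by (simp only: prod.lessThan_Suc_shift)
  finally show ?case .
qed

lemma prod_indicator:
  "finite A \<Longrightarrow> (\<Prod>i\<in>A. if P i then 1 else (0::complex)) = (if \<forall>i\<in>A. P i then 1 else 0)"
  by (induction A rule: finite_induct) auto

lemma sum_mult_delta:
  "finite A \<Longrightarrow> a \<in> A \<Longrightarrow> (\<Sum>b\<in>A. f b * (if a = b then 1 else (0::complex))) = f a"
  by (simp add: if_distrib[of "\<lambda>z. f _ * z"] cong: if_cong)

definition mat_mult :: "nat \<Rightarrow> mat \<Rightarrow> mat \<Rightarrow> mat" where
  "mat_mult n A B = (\<lambda>x y. \<Sum>a\<in>basis n. A x a * B a y)"

lemma conj_by_conj_by: "conj_by n A (conj_by n B \<rho>) = conj_by n (mat_mult n A B) \<rho>"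
proof (intro ext)
  fix x y
  let ?t = "\<lambda>a b c d. A x a * B a c * \<rho> c d * cnj (B b d) * cnj (A y b)"
  have "conj_by n A (conj_by n B \<rho>) x y
      = (\<Sum>a\<in>basis n. \<Sum>b\<in>basis n. \<Sum>c\<in>basis n. \<Sum>d\<in>basis n. ?t a b c d)"
    unfolding conj_by_def by (simp add: sum_distrib_left sum_distrib_right mult.assoc)
  also have "\<dots> = (\<Sum>a\<in>basis n. \<Sum>c\<in>basis n. \<Sum>b\<in>basis n. \<Sum>d\<in>basis n. ?t a b c d)"
    by (rule sum.cong[OF refl], rule sum.swap)
  also have "\<dots> = (\<Sum>c\<in>basis n. \<Sum>a\<in>basis n. \<Sum>d\<in>basis n. \<Sum>b\<in>basis n. ?t a b c d)"
    by (subst sum.swap) (rule sum.cong[OF refl], rule sum.cong[OF refl], rule sum.swap)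
  also have "\<dots> = (\<Sum>c\<in>basis n. \<Sum>d\<in>basis n. \<Sum>a\<in>basis n. \<Sum>b\<in>basis n. ?t a b c d)"
    by (rule sum.cong[OF refl], rule sum.swap)
  also have "\<dots> = conj_by n (mat_mult n A B) \<rho> x y"
    unfolding conj_by_def mat_mult_def by (simp add: sum_distrib_left sum_distrib_right mult_ac)
  finally show "conj_by n A (conj_by n B \<rho>) x y = conj_by n (mat_mult n A B) \<rho> x y" .
qed

lemma conj_by_phase:
  assumes "\<And>x a. a \<in> basis n \<Longrightarrow> A x a = c * B x a" and "c * cnj c = 1"
  shows "conj_by n A \<rho> = conj_by n B \<rho>"
proof (intro ext)
  fix x y
  have "conj_by n A \<rho> x y
      = (\<Sum>a\<in>basis n. \<Sum>b\<in>basis n. (c * cnj c) * (B x a * \<rho> a b * cnj (B y b)))"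
    unfolding conj_by_def using assms(1) by (intro sum.cong refl) (simp add: mult.assoc mult.left_commute)
  then show "conj_by n A \<rho> x y = conj_by n B \<rho> x y" using assms(2) by (simp add: conj_by_def)
qed

lemma conj_by_add:
  "conj_by n M (\<lambda>x y. \<rho>1 x y + \<rho>2 x y) = (\<lambda>x y. conj_by n M \<rho>1 x y + conj_by n M \<rho>2 x y)"
  unfolding conj_by_def by (simp add: sum.distrib distrib_left distrib_right)

lemma conj_by_zero: "conj_by n M (\<lambda>x y. 0) = (\<lambda>x y. 0)"
  unfolding conj_by_def by simp

lemma conj_by_commute:
  "mat_mult n A B = mat_mult n B A \<Longrightarrow> conj_by n A (conj_by n B \<rho>) = conj_by n B (conj_by n A \<rho>)"
  by (simp add: conj_by_conj_by)

lemma apply_unitary_apply_unitary: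
  "apply_unitary n A (apply_unitary n B \<sigma>) = apply_unitary n (mat_mult n A B) \<sigma>"
  by (simp add: apply_unitary_def conj_by_conj_by)

lemma unitary_mat_mult:
  assumes A: "unitary_mat m A" and B: "unitary_mat m B"
  shows "unitary_mat m (mat_mult m A B)"
  unfolding unitary_mat_def
proof (intro ballI)
  fix x y assume x: "x \<in> basis m" and y: "y \<in> basis m"
  let ?t = "\<lambda>k a b. (cnj (B a x) * B b y) * (cnj (A k a) * A k b)"
  have "(\<Sum>k\<in>basis m. cnj (mat_mult m A B k x) * mat_mult m A B k y)
      = (\<Sum>k\<in>basis m. \<Sum>a\<in>basis m. \<Sum>b\<in>basis m. ?t k a b)"
    by (simp add: mat_mult_def sum_distrib_left sum_distrib_right mult_ac)
  also have "\<dots> = (\<Sum>a\<in>basis m. \<Sum>b\<in>basis m. \<Sum>k\<in>basis m. ?t k a b)"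
    by (subst sum.swap) (rule sum.cong[OF refl], rule sum.swap)
  also have "\<dots> = (\<Sum>a\<in>basis m. \<Sum>b\<in>basis m. (cnj (B a x) * B b y) * (if a = b then 1 else 0))"
    using A unfolding unitary_mat_def by (simp add: sum_distrib_left[symmetric])
  also have "\<dots> = (\<Sum>a\<in>basis m. cnj (B a x) * B a y)"
    by (intro sum.cong refl) (simp add: sum_mult_delta)
  also have "\<dots> = (if x = y then 1 else 0)"
    using B x y unfolding unitary_mat_def by simp
  finally show "(\<Sum>k\<in>basis m. cnj (mat_mult m A B k x) * mat_mult m A B k y) = (if x = y then 1 else 0)" .
qed

lemma mat_mult_conj_by_unitary:
  assumes U: "unitary_mat m U" and z: "z \<in> basis m"
  shows "mat_mult m (conj_by m U P) U x z = mat_mult m U P x z"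
proof -
  let ?t = "\<lambda>y a b. (U x a * P a b) * (cnj (U y b) * U y z)"
  have "mat_mult m (conj_by m U P) U x z = (\<Sum>y\<in>basis m. \<Sum>a\<in>basis m. \<Sum>b\<in>basis m. ?t y a b)"
    by (simp add: mat_mult_def conj_by_def sum_distrib_left sum_distrib_right mult_ac)
  also have "\<dots> = (\<Sum>a\<in>basis m. \<Sum>b\<in>basis m. \<Sum>y\<in>basis m. ?t y a b)"
    by (subst sum.swap) (rule sum.cong[OF refl], rule sum.swap)
  also have "\<dots> = (\<Sum>a\<in>basis m. \<Sum>b\<in>basis m. (U x a * P a b) * (if z = b then 1 else 0))"
    using U z unfolding unitary_mat_def by (intro sum.cong refl) (auto simp: sum_distrib_left[symmetric])
  also have "\<dots> = mat_mult m U P x z"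
    using z by (simp add: sum_mult_delta mat_mult_def)
  finally show ?thesis .
qed

fun index_of :: "nat list \<Rightarrow> nat \<Rightarrow> nat" where
  "index_of [] i = 0"
| "index_of (q # qs) i = (if q = i then 0 else Suc (index_of qs i))"

lemma index_of_less: "i \<in> set qs \<Longrightarrow> index_of qs i < length qs"
  by (induction qs) auto

lemma nth_index_of: "i \<in> set qs \<Longrightarrow> qs ! index_of qs i = i"
  by (induction qs) auto

lemma index_of_nth: "distinct qs \<Longrightarrow> k < length qs \<Longrightarrow> index_of qs (qs ! k) = k"
proof (induction qs arbitrary: k)
  case (Cons q qs)
  then show ?case by (cases k) auto
qed simp

definition set_bits :: "nat \<Rightarrow> bool list \<Rightarrow> nat list \<Rightarrow> bool list \<Rightarrow> bool list" where
  "set_bits n x qs b = map (\<lambda>i. if i \<in> set qs then b ! index_of qs i else x ! i) [0..<n]"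

lemma length_set_bits [simp]: "length (set_bits n x qs b) = n"
  by (simp add: set_bits_def)

lemma nth_set_bits: "i < n \<Longrightarrow> set_bits n x qs b ! i = (if i \<in> set qs then b ! index_of qs i else x ! i)"
  by (simp add: set_bits_def)

lemma set_bits_outside: "i < n \<Longrightarrow> i \<notin> set qs \<Longrightarrow> set_bits n x qs b ! i = x ! i"
  by (simp add: nth_set_bits)

lemma set_bits_nth:
  assumes "distinct qs" "\<forall>q\<in>set qs. q < n" "length b = length qs" "k < length qs"
  shows "set_bits n x qs b ! (qs ! k) = b ! k"
  using assms by (simp add: nth_set_bits index_of_nth)

lemma map_nth_set_bits:
  assumes "distinct qs" "\<forall>q\<in>set qs. q < n" "length b = length qs"
  shows "map ((!) (set_bits n x qs b)) qs = b"
  using set_bits_nth[OF assms] assms(3) by (intro nth_equalityI) simp_all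

lemma set_bits_map_nth:
  assumes "length a = n" "\<forall>i<n. i \<notin> set qs \<longrightarrow> x ! i = a ! i"
  shows "set_bits n x qs (map ((!) a) qs) = a"
  using assms by (intro nth_equalityI) (auto simp: nth_set_bits index_of_less nth_index_of)

lemma set_bits_eq_iff:
  assumes dq: "distinct qs" and q: "\<forall>q\<in>set qs. q < n" and disj: "set qs \<inter> set rs = {}"
    and lb: "length b = length qs"
  shows "(\<forall>i<n. i \<notin> set rs \<longrightarrow> set_bits n x qs b ! i = y ! i) \<longleftrightarrow>
         b = map ((!) y) qs \<and> (\<forall>i<n. i \<notin> set qs \<and> i \<notin> set rs \<longrightarrow> x ! i = y ! i)"
proof
  assume H: "\<forall>i<n. i \<notin> set rs \<longrightarrow> set_bits n x qs b ! i = y ! i"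
  have "b ! k = y ! (qs ! k)" if "k < length qs" for k
    using H set_bits_nth[OF dq q lb that] that q disj nth_mem[OF that] by (metis disjoint_iff)
  then have "b = map ((!) y) qs" using lb by (intro nth_equalityI) simp_all
  moreover have "\<forall>i<n. i \<notin> set qs \<and> i \<notin> set rs \<longrightarrow> x ! i = y ! i"
    using H by (metis set_bits_outside)
  ultimately show "b = map ((!) y) qs \<and> (\<forall>i<n. i \<notin> set qs \<and> i \<notin> set rs \<longrightarrow> x ! i = y ! i)" ..
next
  assume "b = map ((!) y) qs \<and> (\<forall>i<n. i \<notin> set qs \<and> i \<notin> set rs \<longrightarrow> x ! i = y ! i)"
  then show "\<forall>i<n. i \<notin> set rs \<longrightarrow> set_bits n x qs b ! i = y ! i"
    by (auto simp: nth_set_bits index_of_less nth_index_of)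
qed

lemma sum_agreeing_outside:
  assumes "distinct qs" "\<forall>q\<in>set qs. q < n"
  shows "(\<Sum>a\<in>{a\<in>basis n. \<forall>i<n. i \<notin> set qs \<longrightarrow> x ! i = a ! i}. G a)
       = (\<Sum>b\<in>basis (length qs). G (set_bits n x qs b))"
proof -
  have "{a\<in>basis n. \<forall>i<n. i \<notin> set qs \<longrightarrow> x ! i = a ! i} = set_bits n x qs ` basis (length qs)"
  proof (intro equalityI subsetI)
    fix a assume "a \<in> {a\<in>basis n. \<forall>i<n. i \<notin> set qs \<longrightarrow> x ! i = a ! i}"
    then have "a = set_bits n x qs (map ((!) a) qs)" by (simp add: set_bits_map_nth)
    then show "a \<in> set_bits n x qs ` basis (length qs)" by (rule image_eqI) simp
  qed (auto simp: set_bits_outside)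
  moreover have "inj_on (set_bits n x qs) (basis (length qs))"
    using map_nth_set_bits[OF assms] by (intro inj_onI) (metis mem_basis_iff)
  ultimately show ?thesis by (simp add: sum.reindex)
qed

lemma if_mult_zero:
  "(if P then A else 0) * (F::complex) = (if P then A * F else 0)"
  "(F::complex) * (if P then A else 0) = (if P then F * A else 0)"
  by simp_all

lemma sum_lift_left:
  assumes "distinct qs" "\<forall>q\<in>set qs. q < n"
  shows "(\<Sum>a\<in>basis n. lift n qs U x a * F a)
       = (\<Sum>b\<in>basis (length qs). U (map ((!) x) qs) b * F (set_bits n x qs b))"
proof -
  have "(\<Sum>a\<in>basis n. lift n qs U x a * F a)
      = (\<Sum>a\<in>{a\<in>basis n. \<forall>i<n. i \<notin> set qs \<longrightarrow> x ! i = a ! i}. U (map ((!) x) qs) (map ((!) a) qs) * F a)"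
    by (simp only: lift_def if_mult_zero sum.inter_filter[OF finite_basis])
  also have "\<dots> = (\<Sum>b\<in>basis (length qs). U (map ((!) x) qs) (map ((!) (set_bits n x qs b)) qs) * F (set_bits n x qs b))"
    by (rule sum_agreeing_outside[OF assms])
  also have "\<dots> = (\<Sum>b\<in>basis (length qs). U (map ((!) x) qs) b * F (set_bits n x qs b))"
    using map_nth_set_bits[OF assms] by (intro sum.cong) simp_all
  finally show ?thesis .
qed

lemma sum_lift_right:
  assumes "distinct qs" "\<forall>q\<in>set qs. q < n"
  shows "(\<Sum>a\<in>basis n. F a * lift n qs U a y)
       = (\<Sum>b\<in>basis (length qs). F (set_bits n y qs b) * U b (map ((!) y) qs))"
proof -
  have "(\<Sum>a\<in>basis n. F a * lift n qs U a y)
      = (\<Sum>a\<in>{a\<in>basis n. \<forall>i<n. i \<notin> set qs \<longrightarrow> a ! i = y ! i}. F a * U (map ((!) a) qs) (map ((!) y) qs))"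
    by (simp only: lift_def if_mult_zero sum.inter_filter[OF finite_basis])
  also have "{a\<in>basis n. \<forall>i<n. i \<notin> set qs \<longrightarrow> a ! i = y ! i} = {a\<in>basis n. \<forall>i<n. i \<notin> set qs \<longrightarrow> y ! i = a ! i}"
    by auto
  also have "(\<Sum>a\<in>\<dots>. F a * U (map ((!) a) qs) (map ((!) y) qs))
      = (\<Sum>b\<in>basis (length qs). F (set_bits n y qs b) * U (map ((!) (set_bits n y qs b)) qs) (map ((!) y) qs))"
    by (rule sum_agreeing_outside[OF assms])
  also have "\<dots> = (\<Sum>b\<in>basis (length qs). F (set_bits n y qs b) * U b (map ((!) y) qs))"
    using map_nth_set_bits[OF assms] by (intro sum.cong) simp_all
  finally show ?thesis .
qed

lemma sum_mult_if_eq: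
  "m \<in> A \<Longrightarrow> finite A \<Longrightarrow>
   (\<Sum>b\<in>A. f b * (if b = m \<and> Q then g else 0)) = (if Q then f m * g else (0::complex))"
  by (cases Q) (simp_all add: if_distrib[of "\<lambda>z. f _ * z"] cong: if_cong)

lemma mat_mult_lift_lift:
  assumes dq: "distinct qs" and q: "\<forall>q\<in>set qs. q < n"
    and r: "\<forall>q\<in>set rs. q < n" and disj: "set qs \<inter> set rs = {}"
  shows "mat_mult n (lift n qs A) (lift n rs B) x y =
     (if \<forall>i<n. i \<notin> set qs \<and> i \<notin> set rs \<longrightarrow> x ! i = y ! i
      then A (map ((!) x) qs) (map ((!) y) qs) * B (map ((!) x) rs) (map ((!) y) rs) else 0)"
proof -
  let ?Q = "\<forall>i<n. i \<notin> set qs \<and> i \<notin> set rs \<longrightarrow> x ! i = y ! i"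
  have on_rs: "map ((!) (set_bits n x qs b)) rs = map ((!) x) rs" for b
    using r disj by (auto intro!: set_bits_outside)
  have "mat_mult n (lift n qs A) (lift n rs B) x y =
      (\<Sum>b\<in>basis (length qs). A (map ((!) x) qs) b * lift n rs B (set_bits n x qs b) y)"
    unfolding mat_mult_def by (rule sum_lift_left[OF dq q])
  also have "\<dots> = (\<Sum>b\<in>basis (length qs). A (map ((!) x) qs) b *
       (if b = map ((!) y) qs \<and> ?Q then B (map ((!) x) rs) (map ((!) y) rs) else 0))"
    unfolding lift_def on_rs using set_bits_eq_iff[OF dq q disj] by (intro sum.cong) simp_all
  also have "\<dots> = (if ?Q then A (map ((!) x) qs) (map ((!) y) qs) * B (map ((!) x) rs) (map ((!) y) rs) else 0)"
    by (rule sum_mult_if_eq) simp_all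
  finally show ?thesis .
qed

lemma mat_mult_lift_commute:
  assumes "distinct qs" "\<forall>q\<in>set qs. q < n" "distinct rs" "\<forall>q\<in>set rs. q < n"
    and "set qs \<inter> set rs = {}"
  shows "mat_mult n (lift n qs A) (lift n rs B) = mat_mult n (lift n rs B) (lift n qs A)"
proof (intro ext)
  fix x y :: "bool list"
  have "set rs \<inter> set qs = {}" using assms(5) by blast
  moreover have "(\<forall>i<n. i \<notin> set qs \<and> i \<notin> set rs \<longrightarrow> x ! i = y ! i)
               = (\<forall>i<n. i \<notin> set rs \<and> i \<notin> set qs \<longrightarrow> x ! i = y ! i)"
    by blast
  ultimately show "mat_mult n (lift n qs A) (lift n rs B) x y = mat_mult n (lift n rs B) (lift n qs A) x y"
    using assms by (simp only: mat_mult_lift_lift mult.commute)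
qed

lemma conj_by_lift_commute:
  assumes "distinct qs" "\<forall>q\<in>set qs. q < n" "j < n" "j \<notin> set qs"
  shows "conj_by n (lift n qs U) (conj_by n (lift n [j] K) \<rho>)
       = conj_by n (lift n [j] K) (conj_by n (lift n qs U) \<rho>)"
  using assms by (intro conj_by_commute mat_mult_lift_commute) auto

definition pauli_op :: "nat \<Rightarrow> (nat \<Rightarrow> pauli) \<Rightarrow> mat" where
  "pauli_op n e = (\<lambda>x y. \<Prod>i<n. pmat (e i) (x ! i) (y ! i))"

lemma pauli_op_cong: "(\<And>i. i < n \<Longrightarrow> e i = e' i) \<Longrightarrow> pauli_op n e = pauli_op n e'"
  unfolding pauli_op_def by (intro ext prod.cong) auto

fun pauli_mult :: "pauli \<Rightarrow> pauli \<Rightarrow> pauli" where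
  "pauli_mult PI q = q"
| "pauli_mult p PI = p"
| "pauli_mult PX PX = PI" | "pauli_mult PY PY = PI" | "pauli_mult PZ PZ = PI"
| "pauli_mult PX PY = PZ" | "pauli_mult PY PX = PZ"
| "pauli_mult PY PZ = PX" | "pauli_mult PZ PY = PX"
| "pauli_mult PX PZ = PY" | "pauli_mult PZ PX = PY"

fun pauli_phase :: "pauli \<Rightarrow> pauli \<Rightarrow> complex" where
  "pauli_phase PX PY = \<i>" | "pauli_phase PY PX = - \<i>"
| "pauli_phase PY PZ = \<i>" | "pauli_phase PZ PY = - \<i>"
| "pauli_phase PZ PX = \<i>" | "pauli_phase PX PZ = - \<i>"
| "pauli_phase _ _ = 1"

lemma pauli_mult_PI [simp]: "pauli_mult P PI = P"
  by (cases P) simp_all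

lemma pauli_mult_commute: "pauli_mult P Q = pauli_mult Q P"
  by (cases P; cases Q) simp_all

lemma pauli_phase_unimodular: "pauli_phase P Q * cnj (pauli_phase P Q) = 1"
  by (cases P; cases Q) simp_all

lemma pmat_mult:
  "pmat P a False * pmat Q False c + pmat P a True * pmat Q True c
   = pauli_phase P Q * pmat (pauli_mult P Q) a c"
  by (cases P; cases Q; cases a; cases c) (simp_all add: pmat_def)

lemma pmat_unitary:
  "cnj (pmat P False u) * pmat P False v + cnj (pmat P True u) * pmat P True v = (if u = v then 1 else 0)"
  by (cases P; cases u; cases v) (simp_all add: pmat_def)

lemma prod_unimodular:
  "(\<And>i. i \<in> A \<Longrightarrow> s i * cnj (s i) = 1) \<Longrightarrow> prod s A * cnj (prod s A) = (1::complex)"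
  by (simp add: prod.distrib[symmetric])

lemma mat_mult_pauli_op:
  "mat_mult n (pauli_op n e1) (pauli_op n e2) x y
   = (\<Prod>i<n. pauli_phase (e1 i) (e2 i)) * pauli_op n (\<lambda>i. pauli_mult (e1 i) (e2 i)) x y"
proof -
  have "mat_mult n (pauli_op n e1) (pauli_op n e2) x y
      = (\<Sum>a\<in>basis n. \<Prod>i<n. pmat (e1 i) (x ! i) (a ! i) * pmat (e2 i) (a ! i) (y ! i))"
    unfolding mat_mult_def pauli_op_def by (simp add: prod.distrib)
  also have "\<dots> = (\<Prod>i<n. pmat (e1 i) (x ! i) False * pmat (e2 i) False (y ! i)
                         + pmat (e1 i) (x ! i) True * pmat (e2 i) True (y ! i))"
    by (rule sum_basis_prod)
  finally show ?thesis by (simp add: pmat_mult pauli_op_def prod.distrib)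
qed

lemma apply_unitary_pauli_op_pauli_op:
  "apply_unitary n (pauli_op n e1) (apply_unitary n (pauli_op n e2) \<sigma>)
   = apply_unitary n (pauli_op n (\<lambda>i. pauli_mult (e1 i) (e2 i))) \<sigma>"
  unfolding apply_unitary_apply_unitary unfolding apply_unitary_def
  by (simp add: conj_by_phase[OF mat_mult_pauli_op prod_unimodular[OF pauli_phase_unimodular]])

lemma prod_lessThan_split:
  fixes qs :: "nat list"
  assumes "distinct qs" "\<forall>q\<in>set qs. q < n"
  shows "(\<Prod>i<n. h i) = (\<Prod>i\<in>{..<n} - set qs. h i) * (\<Prod>k<length qs. h (qs ! k))"
proof -
  have "set qs \<subseteq> {..<n}" using assms(2) by auto
  then have "(\<Prod>i<n. h i) = (\<Prod>i\<in>{..<n} - set qs. h i) * (\<Prod>i\<in>set qs. h i)"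
    by (rule prod.subset_diff) simp
  also have "(\<Prod>i\<in>set qs. h i) = (\<Prod>k<length qs. h (qs ! k))"
  proof -
    have "inj_on (nth qs) {..<length qs}" using assms(1) by (simp add: inj_on_nth)
    moreover have "nth qs ` {..<length qs} = set qs" by (auto simp: set_conv_nth)
    ultimately show ?thesis using prod.reindex[of "nth qs" "{..<length qs}" h] by simp
  qed
  finally show ?thesis .
qed

definition pauli_op_outside :: "nat \<Rightarrow> nat list \<Rightarrow> (nat \<Rightarrow> pauli) \<Rightarrow> mat" where
  "pauli_op_outside n qs e x y = (\<Prod>i\<in>{..<n} - set qs. pmat (e i) (x ! i) (y ! i))"

lemma pauli_op_set_bits_left:
  assumes "distinct qs" "\<forall>q\<in>set qs. q < n" "length b = length qs"
  shows "pauli_op n e (set_bits n x qs b) y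
       = pauli_op_outside n qs e x y * pstr (map e qs) b (map ((!) y) qs)"
  unfolding pauli_op_def pauli_op_outside_def pstr_def prod_lessThan_split[OF assms(1,2)]
  using assms by (simp add: set_bits_outside set_bits_nth)

lemma pauli_op_set_bits_right:
  assumes "distinct qs" "\<forall>q\<in>set qs. q < n" "length b = length qs"
  shows "pauli_op n e x (set_bits n y qs b)
       = pauli_op_outside n qs e x y * pstr (map e qs) (map ((!) x) qs) b"
  unfolding pauli_op_def pauli_op_outside_def pstr_def prod_lessThan_split[OF assms(1,2)]
  using assms by (simp add: set_bits_outside set_bits_nth)

lemma mat_mult_lift_pauli_op:
  assumes "distinct qs" "\<forall>q\<in>set qs. q < n"
  shows "mat_mult n (lift n qs U) (pauli_op n e) x y = pauli_op_outside n qs e x y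
           * mat_mult (length qs) U (pstr (map e qs)) (map ((!) x) qs) (map ((!) y) qs)"
  unfolding mat_mult_def sum_lift_left[OF assms]
  by (simp add: pauli_op_set_bits_left[OF assms] sum_distrib_left mult_ac)

lemma mat_mult_pauli_op_lift:
  assumes "distinct qs" "\<forall>q\<in>set qs. q < n"
  shows "mat_mult n (pauli_op n e) (lift n qs U) x y = pauli_op_outside n qs e x y
           * mat_mult (length qs) (pstr (map e qs)) U (map ((!) x) qs) (map ((!) y) qs)"
  unfolding mat_mult_def sum_lift_right[OF assms]
  by (simp add: pauli_op_set_bits_right[OF assms] sum_distrib_left mult_ac)

lemma lift_single_pauli:
  assumes "j < n"
  shows "lift n [j] (pstr [P]) = pauli_op n (\<lambda>i. if i = j then P else PI)"
proof (intro ext)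
  fix x a
  have "(\<Prod>i\<in>{..<n} - {j}. pmat (if i = j then P else PI) (x ! i) (a ! i))
      = (\<Prod>i\<in>{..<n} - {j}. if x ! i = a ! i then 1 else 0)"
    by (intro prod.cong) (auto simp: pmat_def)
  then have "pauli_op n (\<lambda>i. if i = j then P else PI) x a
      = (if \<forall>i\<in>{..<n} - {j}. x ! i = a ! i then 1 else 0) * pmat P (x ! j) (a ! j)"
    using prod_lessThan_split[of "[j]" n "\<lambda>i. pmat (if i = j then P else PI) (x ! i) (a ! i)"] assms
    by (simp add: pauli_op_def prod_indicator)
  also have "(\<forall>i\<in>{..<n} - {j}. x ! i = a ! i) = (\<forall>i<n. i \<notin> set [j] \<longrightarrow> x ! i = a ! i)"
    by auto
  finally show "lift n [j] (pstr [P]) x a = pauli_op n (\<lambda>i. if i = j then P else PI) x a"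
    by (auto simp: lift_def pstr_def)
qed

lemma pstr_all_PI:
  assumes "\<forall>p\<in>set ps. p = PI" "length x = length ps" "length z = length ps"
  shows "pstr ps x z = (if x = z then 1 else 0)"
proof -
  have "ps ! i = PI" if "i < length ps" for i
    using assms(1) that by simp
  then have "pstr ps x z = (\<Prod>i<length ps. if x ! i = z ! i then 1 else 0)"
    unfolding pstr_def by (intro prod.cong refl) (simp add: pmat_def)
  also have "\<dots> = (if x = z then 1 else 0)"
    using assms(2,3) by (simp add: prod_indicator list_eq_iff_nth_eq)
  finally show ?thesis .
qed

lemma unitary_pstr: "length ps = m \<Longrightarrow> unitary_mat m (pstr ps)"
  unfolding unitary_mat_def
proof (intro ballI)
  fix x y assume "length ps = m" "x \<in> basis m" "y \<in> basis m"
  then have "(\<Sum>k\<in>basis m. cnj (pstr ps k x) * pstr ps k y)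
      = (\<Sum>k\<in>basis m. \<Prod>i<m. cnj (pmat (ps ! i) (k ! i) (x ! i)) * pmat (ps ! i) (k ! i) (y ! i))"
    by (simp add: pstr_def prod.distrib)
  also have "\<dots> = (\<Prod>i<m. cnj (pmat (ps ! i) False (x ! i)) * pmat (ps ! i) False (y ! i)
                    + cnj (pmat (ps ! i) True (x ! i)) * pmat (ps ! i) True (y ! i))"
    by (rule sum_basis_prod)
  also have "\<dots> = (\<Prod>i<m. if x ! i = y ! i then 1 else 0)"
    by (simp only: pmat_unitary)
  also have "\<dots> = (if x = y then 1 else 0)"
    using \<open>x \<in> basis m\<close> \<open>y \<in> basis m\<close> by (simp add: prod_indicator list_eq_iff_nth_eq)
  finally show "(\<Sum>k\<in>basis m. cnj (pstr ps k x) * pstr ps k y) = (if x = y then 1 else 0)" .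
qed

lemma conj_by_pauli_op_commute:
  "conj_by n (pauli_op n e1) (conj_by n (pauli_op n e2) \<rho>)
   = conj_by n (pauli_op n e2) (conj_by n (pauli_op n e1) \<rho>)"
proof -
  let ?p = "\<lambda>e e'. \<Prod>i<n. pauli_phase (e i) (e' i)"
  let ?c = "?p e1 e2 * cnj (?p e2 e1)"
  (* Pauli operators commute up to a unimodular phase, which conjugation does not see. *)
  have unimodular: "?p e e' * cnj (?p e e') = 1" for e e'
    by (rule prod_unimodular) (rule pauli_phase_unimodular)
  have "mat_mult n (pauli_op n e1) (pauli_op n e2) x y = ?c * mat_mult n (pauli_op n e2) (pauli_op n e1) x y"
    for x y
  proof -
    let ?M = "pauli_op n (\<lambda>i. pauli_mult (e1 i) (e2 i)) x y"
    have "(\<lambda>i. pauli_mult (e2 i) (e1 i)) = (\<lambda>i. pauli_mult (e1 i) (e2 i))"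
      by (rule ext) (rule pauli_mult_commute)
    then have M: "mat_mult n (pauli_op n e2) (pauli_op n e1) x y = ?p e2 e1 * ?M"
      by (simp only: mat_mult_pauli_op)
    have "?c * (?p e2 e1 * ?M) = ?p e1 e2 * ?M * (?p e2 e1 * cnj (?p e2 e1))"
      by (simp only: mult_ac)
    also have "\<dots> = mat_mult n (pauli_op n e1) (pauli_op n e2) x y"
      by (simp only: unimodular mult_1_right mat_mult_pauli_op)
    finally show ?thesis by (simp only: M)
  qed
  moreover have "?c * cnj ?c = (?p e1 e2 * cnj (?p e1 e2)) * (?p e2 e1 * cnj (?p e2 e1))"
    by (simp only: complex_cnj_mult complex_cnj_cnj mult_ac)
  then have "?c * cnj ?c = 1"
    by (simp only: unimodular mult_1_right)
  ultimately show ?thesis by (simp add: conj_by_conj_by conj_by_phase)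
qed

lemma fold_apply_single_paulis:
  "Suc k \<le> n \<Longrightarrow> fold (\<lambda>j. apply_unitary n (lift n [j] (pstr [g j]))) [0..<Suc k] \<sigma>
     = apply_unitary n (pauli_op n (\<lambda>i. if i \<le> k then g i else PI)) \<sigma>"
proof (induction k)
  case 0
  then show ?case by (simp add: lift_single_pauli cong: if_cong)
next
  case (Suc k)
  have "(\<lambda>i. pauli_mult (if i = Suc k then g (Suc k) else PI) (if i \<le> k then g i else PI))
      = (\<lambda>i. if i \<le> Suc k then g i else PI)"
    by (auto simp: le_Suc_eq)
  with Suc show ?case by (simp add: lift_single_pauli apply_unitary_pauli_op_pauli_op)
qed

lemma noise_layer_pauli_op:
  assumes "0 < n"
  shows "noise_layer n f t \<sigma> = apply_unitary n (pauli_op n (\<lambda>j. f (t, j))) \<sigma>"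
proof -
  obtain k where k: "n = Suc k" using assms by (cases n) auto
  have "noise_layer n f t \<sigma> = apply_unitary n (pauli_op n (\<lambda>i. if i \<le> k then f (t, i) else PI)) \<sigma>"
    unfolding noise_layer_def k by (rule fold_apply_single_paulis) simp
  also have "pauli_op n (\<lambda>i. if i \<le> k then f (t, i) else PI) = pauli_op n (\<lambda>j. f (t, j))"
    using k by (intro pauli_op_cong) simp
  finally show ?thesis .
qed

section \<open>Pushing Pauli operators through Clifford gates\<close>

definition conjugates_to :: "mat \<Rightarrow> pauli list \<Rightarrow> pauli list \<Rightarrow> bool" where
  "conjugates_to U ps qs \<longleftrightarrow> length qs = length ps \<and> (\<exists>c. c * cnj c = 1 \<and>
     (\<forall>x\<in>basis (length ps). \<forall>z\<in>basis (length ps).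
        mat_mult (length ps) U (pstr ps) x z = c * mat_mult (length ps) (pstr qs) U x z))"

lemma clifford_mat_conjugates_to:
  assumes cl: "clifford_mat (length ps) U"
  shows "\<exists>qs. conjugates_to U ps qs"
proof -
  let ?m = "length ps"
  have U: "unitary_mat ?m U" using cl by (simp add: clifford_mat_def)
  obtain qs c where lq: "length qs = ?m"
    and H: "\<forall>x\<in>basis ?m. \<forall>y\<in>basis ?m. conj_by ?m U (pstr ps) x y = c * pstr qs x y"
    using cl unfolding clifford_mat_def by blast
  have UP: "mat_mult ?m U (pstr ps) x z = c * mat_mult ?m (pstr qs) U x z"
    if "x \<in> basis ?m" "z \<in> basis ?m" for x z
  proof -
    have "mat_mult ?m U (pstr ps) x z = mat_mult ?m (conj_by ?m U (pstr ps)) U x z"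
      using mat_mult_conj_by_unitary[OF U that(2)] by simp
    also have "\<dots> = c * mat_mult ?m (pstr qs) U x z"
      using H that by (simp add: mat_mult_def sum_distrib_left mult.assoc)
    finally show ?thesis .
  qed
  (* The phase is unimodular because the columns of U P and of Q U are unit vectors. *)
  let ?z = "replicate ?m False"
  have "1 = (\<Sum>x\<in>basis ?m. cnj (mat_mult ?m U (pstr ps) x ?z) * mat_mult ?m U (pstr ps) x ?z)"
    using unitary_mat_mult[OF U unitary_pstr[OF refl]] unfolding unitary_mat_def by simp
  also have "\<dots> = (\<Sum>x\<in>basis ?m. (c * cnj c) * (cnj (mat_mult ?m (pstr qs) U x ?z) * mat_mult ?m (pstr qs) U x ?z))"
    using UP by (intro sum.cong refl) (simp add: mult_ac)
  also have "\<dots> = c * cnj c"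
    using unitary_mat_mult[OF unitary_pstr[OF lq] U] unfolding unitary_mat_def
    by (simp add: sum_distrib_left[symmetric])
  finally show ?thesis
    using lq UP unfolding conjugates_to_def by auto
qed

text \<open>The identity is mapped to itself explicitly, so that pushing noise through a gate never
  creates noise on the gate's qubits.\<close>
definition clifford_image :: "mat \<Rightarrow> pauli list \<Rightarrow> pauli list" where
  "clifford_image U ps = (if \<forall>p\<in>set ps. p = PI then ps else SOME qs. conjugates_to U ps qs)"

lemma conjugates_to_clifford_image:
  assumes "clifford_mat (length ps) U"
  shows "conjugates_to U ps (clifford_image U ps)"
proof (cases "\<forall>p\<in>set ps. p = PI")
  case True
  have "mat_mult (length ps) U (pstr ps) x z = mat_mult (length ps) (pstr ps) U x z"
    if "x \<in> basis (length ps)" "z \<in> basis (length ps)" for x z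
  proof -
    have "pstr ps a b = (if a = b then 1 else 0)" if "a \<in> basis (length ps)" "b \<in> basis (length ps)" for a b
      using True that by (simp add: pstr_all_PI)
    then show ?thesis
      using that by (simp add: mat_mult_def sum_mult_delta mult.commute eq_commute[of _ z] cong: if_cong)
  qed
  then show ?thesis using True unfolding clifford_image_def conjugates_to_def by (intro conjI exI[of _ 1]) auto
next
  case False
  then show ?thesis
    unfolding clifford_image_def using someI_ex[OF clifford_mat_conjugates_to[OF assms]] by auto
qed

fun propagate :: "op \<Rightarrow> (nat \<Rightarrow> pauli) \<Rightarrow> nat \<Rightarrow> pauli" where
  "propagate (Gate qs U) e = (\<lambda>i. if i \<in> set qs then clifford_image U (map e qs) ! index_of qs i else e i)"
| "propagate _ e = e"

lemma apply_gate_pauli_op: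
  assumes dq: "distinct qs" and q: "\<forall>q\<in>set qs. q < n" and cl: "clifford_mat (length qs) U"
  shows "apply_op n (Gate qs U) (apply_unitary n (pauli_op n e) \<sigma>)
       = apply_unitary n (pauli_op n (propagate (Gate qs U) e)) (apply_op n (Gate qs U) \<sigma>)"
proof -
  let ?e' = "propagate (Gate qs U) e"
  have "conjugates_to U (map e qs) (clifford_image U (map e qs))"
    using cl by (intro conjugates_to_clifford_image) simp
  moreover have "map ?e' qs = clifford_image U (map e qs)"
    using dq calculation unfolding conjugates_to_def by (intro nth_equalityI) (simp_all add: index_of_nth)
  ultimately obtain c where c: "c * cnj c = 1" and UP: "\<forall>x\<in>basis (length qs). \<forall>z\<in>basis (length qs).
      mat_mult (length qs) U (pstr (map e qs)) x z = c * mat_mult (length qs) (pstr (map ?e' qs)) U x z"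
    unfolding conjugates_to_def by auto
  have outside: "pauli_op_outside n qs ?e' = pauli_op_outside n qs e"
    unfolding pauli_op_outside_def by (intro ext prod.cong) auto
  have M: "mat_mult n (lift n qs U) (pauli_op n e) x y = c * mat_mult n (pauli_op n ?e') (lift n qs U) x y"
    for x y
    by (simp add: mat_mult_lift_pauli_op[OF dq q] mat_mult_pauli_op_lift[OF dq q] UP outside[symmetric])
  have "apply_op n (Gate qs U) (apply_unitary n (pauli_op n e) \<sigma>)
      = apply_unitary n (mat_mult n (lift n qs U) (pauli_op n e)) \<sigma>"
    by (simp add: apply_unitary_apply_unitary)
  also have "\<dots> = apply_unitary n (mat_mult n (pauli_op n ?e') (lift n qs U)) \<sigma>"
    unfolding apply_unitary_def by (simp add: conj_by_phase[OF M c])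
  also have "\<dots> = apply_unitary n (pauli_op n ?e') (apply_op n (Gate qs U) \<sigma>)"
    by (simp add: apply_unitary_apply_unitary)
  finally show ?thesis .
qed

lemma apply_cpauli_pauli_op:
  assumes "j < n"
  shows "apply_op n (CPauli j P c) (apply_unitary n (pauli_op n e) \<sigma>)
       = apply_unitary n (pauli_op n e) (apply_op n (CPauli j P c) \<sigma>)"
proof (rule ext)
  fix r
  show "apply_op n (CPauli j P c) (apply_unitary n (pauli_op n e) \<sigma>) r
      = apply_unitary n (pauli_op n e) (apply_op n (CPauli j P c) \<sigma>) r"
    by (simp add: apply_unitary_def lift_single_pauli[OF assms] conj_by_pauli_op_commute[of n _ e])
qed

lemma fold_apply_op_pauli_op:
  assumes "\<forall>u\<in>set us. is_unitary_op u \<and> wf_op n u \<and> distinct (op_qubits u)"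
  shows "fold (apply_op n) us (apply_unitary n (pauli_op n e) \<sigma>)
       = apply_unitary n (pauli_op n (fold propagate us e)) (fold (apply_op n) us \<sigma>)"
  using assms
proof (induction us arbitrary: e \<sigma>)
  case (Cons u us)
  have "apply_op n u (apply_unitary n (pauli_op n e) \<sigma>)
      = apply_unitary n (pauli_op n (propagate u e)) (apply_op n u \<sigma>)"
  proof (cases u)
    case (Gate qs U)
    then show ?thesis using Cons.prems apply_gate_pauli_op[of qs n U e \<sigma>] by auto
  next
    case (CPauli j P c)
    then show ?thesis using Cons.prems apply_cpauli_pauli_op[of j n P c e \<sigma>] by auto
  qed (use Cons.prems in auto)
  then show ?case using Cons by simp
qed simp

section \<open>Commuting unitaries past preparations and measurements\<close>

text \<open>A classically controlled Pauli moved past \<open>k\<close> measurements has to ignore the \<open>k\<close> outcomes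
  they append to the record.\<close>
fun delay_control :: "nat \<Rightarrow> op \<Rightarrow> op" where
  "delay_control k (CPauli j P c) = CPauli j P (\<lambda>r. c (take (length r - k) r))"
| "delay_control k u = u"

lemma delay_control_0 [simp]: "delay_control 0 u = u"
  by (cases u) auto

lemma op_qubits_delay_control [simp]: "op_qubits (delay_control k u) = op_qubits u"
  and is_unitary_op_delay_control [simp]: "is_unitary_op (delay_control k u) = is_unitary_op u"
  and is_prep_delay_control [simp]: "is_prep (delay_control k u) = is_prep u"
  and is_meas_delay_control [simp]: "is_meas (delay_control k u) = is_meas u"
  and wf_op_delay_control [simp]: "wf_op n (delay_control k u) = wf_op n u"
  and propagate_delay_control [simp]: "propagate (delay_control k u) e = propagate u e"
  by (cases u; simp)+

lemma apply_op_apply_prep_commute: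
  assumes u: "is_unitary_op u" "distinct (op_qubits u)" "\<forall>q\<in>set (op_qubits u). q < n"
    and j: "j < n" "j \<notin> set (op_qubits u)"
  shows "apply_op n u (apply_prep n j \<sigma>) = apply_prep n j (apply_op n u \<sigma>)"
proof -
  have comm: "conj_by n (lift n (op_qubits u) U) (conj_by n (lift n [j] K) \<rho>)
      = conj_by n (lift n [j] K) (conj_by n (lift n (op_qubits u) U) \<rho>)" for U K \<rho>
    using u j by (intro conj_by_lift_commute) auto
  show ?thesis
  proof (cases u)
    case (Gate qs U)
    then show ?thesis using comm[of U] by (simp add: apply_prep_def apply_unitary_def conj_by_add)
  next
    case (CPauli j' P c)
    then show ?thesis using comm[of "pstr [P]"] by (intro ext) (simp add: apply_prep_def conj_by_add)
  qed (use u in auto)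
qed

lemma apply_op_apply_meas_commute:
  assumes u: "is_unitary_op u" "distinct (op_qubits u)" "\<forall>q\<in>set (op_qubits u). q < n"
    and j: "j < n" "j \<notin> set (op_qubits u)"
  shows "apply_op n (delay_control (Suc k) u) (apply_meas n j \<sigma>)
       = apply_meas n j (apply_op n (delay_control k u) \<sigma>)"
proof -
  have comm: "conj_by n (lift n (op_qubits u) U) (conj_by n (lift n [j] K) \<rho>)
      = conj_by n (lift n [j] K) (conj_by n (lift n (op_qubits u) U) \<rho>)" for U K \<rho>
    using u j by (intro conj_by_lift_commute) auto
  show ?thesis
  proof (cases u)
    case (Gate qs U)
    then show ?thesis
      using comm[of U] by (intro ext) (simp add: apply_meas_def apply_unitary_def conj_by_zero)
  next
    case (CPauli j' P c)
    then show ?thesis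
      using comm[of "pstr [P]"] by (intro ext) (simp add: apply_meas_def conj_by_zero take_butlast)
  qed (use u in auto)
qed

lemma fold_apply_preps_commute:
  assumes u: "is_unitary_op u" "distinct (op_qubits u)" "\<forall>q\<in>set (op_qubits u). q < n"
    and ps: "\<forall>p\<in>set ps. is_prep p \<and> wf_op n p \<and> set (op_qubits p) \<inter> set (op_qubits u) = {}"
  shows "apply_op n u (fold (apply_op n) ps \<sigma>) = fold (apply_op n) ps (apply_op n u \<sigma>)"
  using ps
proof (induction ps arbitrary: \<sigma>)
  case (Cons p ps)
  then obtain j where "p = Prep j" "j < n" "j \<notin> set (op_qubits u)" by (cases p) auto
  with Cons show ?case by (simp add: apply_op_apply_prep_commute[OF u])
qed simp

lemma fold_apply_meass_commute:
  assumes u: "is_unitary_op u" "distinct (op_qubits u)" "\<forall>q\<in>set (op_qubits u). q < n"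
    and ms: "\<forall>p\<in>set ms. is_meas p \<and> wf_op n p \<and> set (op_qubits p) \<inter> set (op_qubits u) = {}"
  shows "apply_op n (delay_control (length ms) u) (fold (apply_op n) ms \<sigma>)
       = fold (apply_op n) ms (apply_op n u \<sigma>)"
  using ms
proof (induction ms rule: rev_induct)
  case (snoc m ms)
  then obtain j where "m = Meas j" "j < n" "j \<notin> set (op_qubits u)" by (cases m) auto
  with snoc show ?case by (simp add: apply_op_apply_meas_commute[OF u])
qed simp

lemma fold_apply_ops_reorder:
  assumes us: "\<forall>u\<in>set us. is_unitary_op u \<and> distinct (op_qubits u) \<and> (\<forall>q\<in>set (op_qubits u). q < n)"
    and ps: "\<forall>u\<in>set us. \<forall>p\<in>set ps. is_prep p \<and> wf_op n p \<and> set (op_qubits p) \<inter> set (op_qubits u) = {}"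
    and ms: "\<forall>u\<in>set us. \<forall>p\<in>set ms. is_meas p \<and> wf_op n p \<and> set (op_qubits p) \<inter> set (op_qubits u) = {}"
  shows "fold (apply_op n) (map (delay_control (length ms)) us) (fold (apply_op n) ms (fold (apply_op n) ps \<sigma>))
       = fold (apply_op n) ms (fold (apply_op n) ps (fold (apply_op n) us \<sigma>))"
  using us ps ms
proof (induction us arbitrary: \<sigma>)
  case (Cons u us)
  then have u: "is_unitary_op u" "distinct (op_qubits u)" "\<forall>q\<in>set (op_qubits u). q < n" by auto
  have "apply_op n (delay_control (length ms) u) (fold (apply_op n) ms (fold (apply_op n) ps \<sigma>))
      = fold (apply_op n) ms (fold (apply_op n) ps (apply_op n u \<sigma>))"
    using Cons.prems by (simp add: fold_apply_meass_commute[OF u] fold_apply_preps_commute[OF u])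
  with Cons show ?case by simp
qed simp

definition prep_meas_part :: "layer \<Rightarrow> layer" where
  "prep_meas_part L = filter (\<lambda>u. is_prep u \<or> is_meas u) L"

definition unitary_part :: "layer \<Rightarrow> layer" where
  "unitary_part L = map (delay_control (length (filter is_meas L))) (filter is_unitary_op L)"

fun split_layers :: "circuit \<Rightarrow> circuit" where
  "split_layers [] = []"
| "split_layers (L # Ls) = prep_meas_part L # unitary_part L # split_layers Ls"

lemma wf_op_qubits_less: "wf_op n u \<Longrightarrow> \<forall>q\<in>set (op_qubits u). q < n"
  by (cases u) auto

lemma op_kind_disjoint: "is_unitary_op u \<Longrightarrow> \<not> is_prep u \<and> \<not> is_meas u" "is_prep u \<Longrightarrow> \<not> is_meas u"
  by (cases u; simp)+

lemma layer_sem_prep_meas_part: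
  "layer_sem n (prep_meas_part L) \<sigma> = fold (apply_op n) (filter is_meas L) (fold (apply_op n) (filter is_prep L) \<sigma>)"
proof -
  have "filter is_unitary_op (prep_meas_part L) = []"
    unfolding prep_meas_part_def by (auto simp: filter_empty_conv dest: op_kind_disjoint)
  moreover have "filter is_prep (prep_meas_part L) = filter is_prep L"
    and "filter is_meas (prep_meas_part L) = filter is_meas L"
    unfolding prep_meas_part_def by (auto intro: filter_cong)
  ultimately show ?thesis unfolding layer_sem_def by simp
qed

lemma layer_sem_unitary_part: "layer_sem n (unitary_part L) \<sigma> = fold (apply_op n) (unitary_part L) \<sigma>"
proof -
  have "filter is_unitary_op (unitary_part L) = unitary_part L"
    and "filter is_prep (unitary_part L) = []" and "filter is_meas (unitary_part L) = []"
    unfolding unitary_part_def by (auto simp: filter_id_conv filter_empty_conv dest: op_kind_disjoint)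
  then show ?thesis unfolding layer_sem_def by simp
qed

lemma distinct_concat_map_disjoint:
  "distinct (concat (map f xs)) \<Longrightarrow> a \<in> set xs \<Longrightarrow> b \<in> set xs \<Longrightarrow> a \<noteq> b \<Longrightarrow> set (f a) \<inter> set (f b) = {}"
  by (induction xs) auto

lemma distinct_concat_map_elem: "distinct (concat (map f xs)) \<Longrightarrow> a \<in> set xs \<Longrightarrow> distinct (f a)"
  by (induction xs) auto

lemma distinct_concat_map_filter: "distinct (concat (map f xs)) \<Longrightarrow> distinct (concat (map f (filter P xs)))"
  by (induction xs) auto

lemma layer_sem_split:
  assumes wf: "wf_layer n L"
  shows "fold (apply_op n) (unitary_part L) (layer_sem n (prep_meas_part L) \<sigma>) = layer_sem n L \<sigma>"
proof -
  have dL: "distinct (concat (map op_qubits L))" and wL: "\<forall>u\<in>set L. wf_op n u"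
    using wf by (auto simp: wf_layer_def)
  have disj: "set (op_qubits p) \<inter> set (op_qubits u) = {}"
    if "u \<in> set L" "is_unitary_op u" "p \<in> set L" "is_prep p \<or> is_meas p" for u p
    using distinct_concat_map_disjoint[OF dL, of p u] op_kind_disjoint(1)[of u] that by auto
  have "fold (apply_op n) (unitary_part L) (fold (apply_op n) (filter is_meas L) (fold (apply_op n) (filter is_prep L) \<sigma>))
      = fold (apply_op n) (filter is_meas L) (fold (apply_op n) (filter is_prep L) (fold (apply_op n) (filter is_unitary_op L) \<sigma>))"
    unfolding unitary_part_def
    using wL disj distinct_concat_map_elem[OF dL] wf_op_qubits_less
    by (intro fold_apply_ops_reorder) auto
  then show ?thesis unfolding layer_sem_prep_meas_part by (simp add: layer_sem_def)
qed

lemma wf_layer_0: "wf_layer 0 L \<Longrightarrow> L = []"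
  by (cases L) (auto simp: wf_layer_def elim: wf_op.elims)

lemma fold_propagate_unitary_part:
  "fold propagate (unitary_part L) e = fold propagate (filter is_unitary_op L) e"
proof -
  have "propagate \<circ> delay_control k = propagate" for k
    by (intro ext) simp
  then show ?thesis by (simp add: unitary_part_def fold_map)
qed

lemma noise_layer_split:
  assumes wf: "wf_layer n L"
    and g: "\<forall>j<n. g (t', j) = pauli_mult (f (Suc t, j)) (fold propagate (filter is_unitary_op L) (\<lambda>i. f (t, i)) j)"
  shows "noise_layer n f (Suc t) (layer_sem n (unitary_part L) (noise_layer n f t (layer_sem n (prep_meas_part L) \<sigma>)))
       = noise_layer n g t' (layer_sem n L \<sigma>)"
proof (cases "n = 0")
  case True
  then have "L = []" using wf by (simp add: wf_layer_0)
  with True show ?thesis by (simp add: noise_layer_def layer_sem_def prep_meas_part_def unitary_part_def)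
next
  case False
  let ?e0 = "\<lambda>i. f (t, i)" and ?e1 = "\<lambda>i. f (Suc t, i)"
  have dL: "distinct (concat (map op_qubits L))" and wL: "\<forall>u\<in>set L. wf_op n u"
    using wf by (auto simp: wf_layer_def)
  then have us: "\<forall>u\<in>set (unitary_part L). is_unitary_op u \<and> wf_op n u \<and> distinct (op_qubits u)"
    unfolding unitary_part_def using distinct_concat_map_elem[OF dL] by auto
  have "noise_layer n f (Suc t) (layer_sem n (unitary_part L) (noise_layer n f t (layer_sem n (prep_meas_part L) \<sigma>)))
      = apply_unitary n (pauli_op n ?e1) (fold (apply_op n) (unitary_part L)
          (apply_unitary n (pauli_op n ?e0) (layer_sem n (prep_meas_part L) \<sigma>)))"
    using False by (simp add: noise_layer_pauli_op layer_sem_unitary_part)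
  also have "\<dots> = apply_unitary n (pauli_op n ?e1) (apply_unitary n (pauli_op n (fold propagate (unitary_part L) ?e0))
          (layer_sem n L \<sigma>))"
    by (simp add: fold_apply_op_pauli_op[OF us] layer_sem_split[OF wf])
  also have "\<dots> = apply_unitary n (pauli_op n (\<lambda>j. g (t', j))) (layer_sem n L \<sigma>)"
    using g by (simp add: apply_unitary_pauli_op_pauli_op fold_propagate_unitary_part cong: pauli_op_cong)
  also have "\<dots> = noise_layer n g t' (layer_sem n L \<sigma>)"
    using False by (simp add: noise_layer_pauli_op)
  finally show ?thesis .
qed

text \<open>Noise after layer \<open>2t\<close> of the split circuit, pushed through the unitaries of layer \<open>2t+1\<close>,
  merged with the noise after layer \<open>2t+1\<close>.\<close>
definition pushed_noise :: "circuit \<Rightarrow> noise \<Rightarrow> noise" where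
  "pushed_noise C f = (\<lambda>(t, j). if t < length C
     then pauli_mult (f (Suc (2 * t), j)) (fold propagate (filter is_unitary_op (C ! t)) (\<lambda>i. f (2 * t, i)) j)
     else PI)"

lemma run_split_layers:
  assumes C: "clifford_circuit n C"
  shows "k \<le> length C \<Longrightarrow> run n (split_layers (drop k C)) f (2 * k) \<sigma> = run n (drop k C) (pushed_noise C f) k \<sigma>"
proof (induction "length C - k" arbitrary: k \<sigma>)
  case (Suc m)
  then have k: "k < length C" by simp
  then have drop_k: "drop k C = C ! k # drop (Suc k) C" by (simp add: Cons_nth_drop_Suc)
  have wf: "wf_layer n (C ! k)" using C k by (simp add: clifford_circuit_def)
  have "\<forall>j<n. pushed_noise C f (k, j)
      = pauli_mult (f (Suc (2 * k), j)) (fold propagate (filter is_unitary_op (C ! k)) (\<lambda>i. f (2 * k, i)) j)"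
    using k by (simp add: pushed_noise_def)
  note layer = noise_layer_split[OF wf this]
  have IH: "run n (split_layers (drop (Suc k) C)) f (2 * Suc k) \<tau> = run n (drop (Suc k) C) (pushed_noise C f) (Suc k) \<tau>" for \<tau>
    using Suc k by (metis Suc_diff_Suc Suc_leI nat.inject)
  show ?case
    unfolding drop_k using IH[symmetric] by (simp add: layer)
qed simp

lemma noisy_sem_split_layers:
  "clifford_circuit n C \<Longrightarrow> noisy_sem n (split_layers C) = noisy_sem n C \<circ> pushed_noise C"
  using run_split_layers[of n C 0] by (simp add: noisy_sem_def fun_eq_iff)

lemma length_split_layers: "length (split_layers C) = 2 * length C"
  by (induction C) auto

lemma nth_split_layers:
  "t < 2 * length C \<Longrightarrow>
   split_layers C ! t = (if even t then prep_meas_part (C ! (t div 2)) else unitary_part (C ! (t div 2)))"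
proof (induction C arbitrary: t)
  case (Cons L Ls)
  show ?case
  proof (cases t)
    case (Suc t')
    then show ?thesis
      using Cons by (cases t') (auto simp: Cons.IH)
  qed simp
qed simp

lemma clifford_circuit_split_layers: "clifford_circuit n C \<Longrightarrow> clifford_circuit n (split_layers C)"
proof (induction C)
  case (Cons L Ls)
  have "distinct (concat (map op_qubits (unitary_part L))) = distinct (concat (map op_qubits (filter is_unitary_op L)))"
    by (simp add: unitary_part_def comp_def)
  with Cons show ?case
    by (auto simp: clifford_circuit_def wf_layer_def prep_meas_part_def unitary_part_def
        intro: distinct_concat_map_filter)
qed (simp add: clifford_circuit_def)

lemma prep_meas_layer_prep_meas_part: "prep_meas_layer (prep_meas_part L)"
proof -
  have "prep_meas_id_op u" if "is_prep u \<or> is_meas u" for u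
    using that by (cases u) auto
  then show ?thesis unfolding prep_meas_layer_def prep_meas_part_def by auto
qed

lemma unitary_layer_unitary_part: "unitary_layer (unitary_part L)"
  unfolding unitary_layer_def unitary_part_def by auto

section \<open>Locality of the pushed noise\<close>

definition layer_nbhd :: "layer \<Rightarrow> nat \<Rightarrow> nat set" where
  "layer_nbhd L j = {k. k = j \<or> (\<exists>u\<in>set L. j \<in> set (op_qubits u) \<and> k \<in> set (op_qubits u))}"

lemma layer_nbhd_sym: "k \<in> layer_nbhd L j \<longleftrightarrow> j \<in> layer_nbhd L k"
  unfolding layer_nbhd_def by blast

lemma layer_nbhd_subset: "set L \<subseteq> set L' \<Longrightarrow> layer_nbhd L j \<subseteq> layer_nbhd L' j"
  unfolding layer_nbhd_def by blast

lemma layer_nbhd_outside: "\<forall>u\<in>set L. j \<notin> set (op_qubits u) \<Longrightarrow> layer_nbhd L j = {j}"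
  unfolding layer_nbhd_def by blast

lemma layer_nbhd_card:
  assumes wf: "wf_layer n L"
  shows "finite (layer_nbhd L j) \<and> card (layer_nbhd L j) \<le> 2"
proof (cases "\<exists>u\<in>set L. j \<in> set (op_qubits u)")
  case True
  then obtain u where u: "u \<in> set L" "j \<in> set (op_qubits u)" by blast
  have "layer_nbhd L j \<subseteq> set (op_qubits u)"
    using distinct_concat_map_disjoint[of op_qubits L _ u] wf u
    unfolding layer_nbhd_def wf_layer_def by blast
  moreover have "card (set (op_qubits u)) \<le> 2"
    using wf u card_length[of "op_qubits u"] by (auto simp: wf_layer_def elim!: wf_op.elims)
  ultimately show ?thesis by (meson List.finite_set card_mono finite_subset order_trans)
qed (simp add: layer_nbhd_outside)

lemma layer_nbhd_subset_lessThan: "wf_layer n L \<Longrightarrow> j < n \<Longrightarrow> layer_nbhd L j \<subseteq> {..<n}"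
  unfolding layer_nbhd_def wf_layer_def by (auto dest: wf_op_qubits_less)

lemma propagate_support:
  assumes "propagate u e k \<noteq> PI"
  shows "\<exists>k'\<in>layer_nbhd [u] k. e k' \<noteq> PI"
proof (cases u)
  case (Gate qs U)
  show ?thesis
  proof (cases "k \<in> set qs")
    case True
    have "\<exists>k'\<in>set qs. e k' \<noteq> PI"
    proof (rule ccontr)
      assume no_noise: "\<not> (\<exists>k'\<in>set qs. e k' \<noteq> PI)"
      then have "propagate u e k = e k"
        using Gate True by (simp add: clifford_image_def index_of_less nth_index_of)
      then show False using assms True no_noise by simp
    qed
    then show ?thesis using Gate True by (auto simp: layer_nbhd_def)
  qed (use assms Gate in \<open>auto simp: layer_nbhd_def\<close>)
qed (use assms in \<open>auto simp: layer_nbhd_def\<close>)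

lemma fold_propagate_support:
  "distinct (concat (map op_qubits us)) \<Longrightarrow> fold propagate us e j \<noteq> PI \<Longrightarrow> \<exists>k\<in>layer_nbhd us j. e k \<noteq> PI"
proof (induction us arbitrary: e)
  case (Cons u us)
  then have "\<exists>k\<in>layer_nbhd us j. propagate u e k \<noteq> PI"
    using Cons.IH[of "propagate u e"] by simp
  then obtain k where k: "k \<in> layer_nbhd us j" and "propagate u e k \<noteq> PI" by blast
  then obtain k' where k': "k' \<in> layer_nbhd [u] k" and "e k' \<noteq> PI"
    using propagate_support by blast
  moreover have "k' \<in> layer_nbhd (u # us) j"
  proof (cases "k = j")
    case False
    then have "k \<notin> set (op_qubits u)" using k Cons.prems(1) by (auto simp: layer_nbhd_def)
    then show ?thesis using k k' layer_nbhd_subset[of us "u # us" j] by (auto simp: layer_nbhd_def)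
  qed (use k' layer_nbhd_subset[of "[u]" "u # us" j] in auto)
  ultimately show ?case by blast
qed (simp add: layer_nbhd_def)

definition noise_sources :: "circuit \<Rightarrow> nat \<times> nat \<Rightarrow> (nat \<times> nat) set" where
  "noise_sources C w = insert (Suc (2 * fst w), snd w) (Pair (2 * fst w) ` layer_nbhd (C ! fst w) (snd w))"

lemma pushed_noise_support:
  assumes "t < length C" "pushed_noise C f (t, j) \<noteq> PI" "wf_layer n (C ! t)"
  shows "\<exists>v\<in>noise_sources C (t, j). f v \<noteq> PI"
proof (cases "f (Suc (2 * t), j) = PI")
  case True
  then have "fold propagate (filter is_unitary_op (C ! t)) (\<lambda>i. f (2 * t, i)) j \<noteq> PI"
    using assms by (simp add: pushed_noise_def)
  moreover have "distinct (concat (map op_qubits (filter is_unitary_op (C ! t))))"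
    using assms by (simp add: wf_layer_def distinct_concat_map_filter)
  ultimately obtain k where "k \<in> layer_nbhd (filter is_unitary_op (C ! t)) j" "f (2 * t, k) \<noteq> PI"
    using fold_propagate_support by blast
  then show ?thesis
    using layer_nbhd_subset[of "filter is_unitary_op (C ! t)" "C ! t" j] by (auto simp: noise_sources_def)
qed (simp add: noise_sources_def)

lemma noise_sources_bounded:
  assumes C: "clifford_circuit n C" and w: "w \<in> {..<length C} \<times> {..<n}"
  shows "finite (noise_sources C w) \<and> card (noise_sources C w) \<le> 3
    \<and> noise_sources C w \<subseteq> {..<2 * length C} \<times> {..<n}"
proof -
  obtain t j where tj: "w = (t, j)" "t < length C" "j < n" using w by auto
  then have wf: "wf_layer n (C ! t)" using C by (simp add: clifford_circuit_def)
  note nbhd = layer_nbhd_card[OF wf, of j]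
  have "card (noise_sources C w) \<le> Suc (card (Pair (2 * t) ` layer_nbhd (C ! t) j))"
    unfolding noise_sources_def tj by (simp add: card_insert_le_m1 card_insert_if)
  also have "\<dots> \<le> 3" using nbhd card_image_le[of "layer_nbhd (C ! t) j" "Pair (2 * t)"] by simp
  finally show ?thesis
    using nbhd tj layer_nbhd_subset_lessThan[OF wf tj(3)] by (auto simp: noise_sources_def)
qed

lemma noise_sources_fibre:
  assumes C: "clifford_circuit n C" and W: "W \<subseteq> {..<length C} \<times> {..<n}"
  shows "card {w\<in>W. v \<in> noise_sources C w} \<le> 2"
proof -
  obtain s k where v: "v = (s, k)" by (cases v)
  let ?fibre = "{w\<in>W. v \<in> noise_sources C w}"
  consider "odd s" | "even s" "?fibre = {}" | "even s" "?fibre \<noteq> {}" by blast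
  then show ?thesis
  proof cases
    case 1
    then have "?fibre \<subseteq> {(s div 2, k)}" using v by (auto simp: noise_sources_def)
    then have "card ?fibre \<le> card {(s div 2, k)}" by (intro card_mono) auto
    then show ?thesis by simp
  next
    case 2
    then show ?thesis by (simp only: card.empty zero_le)
  next
    case 3
    then have "s div 2 < length C" using v W by (auto simp: noise_sources_def)
    then have "wf_layer n (C ! (s div 2))" using C by (simp add: clifford_circuit_def)
    note nbhd = layer_nbhd_card[OF this, of k]
    have "?fibre \<subseteq> Pair (s div 2) ` layer_nbhd (C ! (s div 2)) k"
      using 3 v layer_nbhd_sym by (auto simp: noise_sources_def)
    then have "card ?fibre \<le> card (Pair (s div 2) ` layer_nbhd (C ! (s div 2)) k)"
      using nbhd by (intro card_mono) auto
    also have "\<dots> \<le> 2" using nbhd card_image_le[of _ "Pair (s div 2)"] order_trans by blast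
    finally show ?thesis .
  qed
qed

section \<open>A union bound for local stochastic noise\<close>

lemma card_le_mult_card_image:
  assumes "finite W" "\<And>w. w \<in> W \<Longrightarrow> \<phi> w \<in> S w" "\<And>v. card {w\<in>W. v \<in> S w} \<le> b"
  shows "card W \<le> b * card (\<phi> ` W)"
proof -
  have "card W \<le> card (\<Union>v\<in>\<phi> ` W. {w\<in>W. v \<in> S w})"
    using assms(1,2) by (intro card_mono) auto
  also have "\<dots> \<le> (\<Sum>v\<in>\<phi> ` W. card {w\<in>W. v \<in> S w})"
    using assms(1) by (intro card_UN_le) simp
  also have "\<dots> \<le> b * card (\<phi> ` W)"
    using sum_bounded_above[of "\<phi> ` W" "\<lambda>v. card {w\<in>W. v \<in> S w}" b] assms(3) by (simp add: mult.commute)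
  finally show ?thesis .
qed

lemma power_le_root_power:
  fixes p :: real
  assumes "0 \<le> p" "p \<le> 1" "0 < b" "m \<le> b * k"
  shows "p ^ k \<le> root b p ^ m"
proof -
  have "p ^ k = root b p ^ (b * k)"
    using assms by (simp add: power_mult)
  also have "\<dots> \<le> root b p ^ m"
    using assms by (intro power_decreasing) auto
  finally show ?thesis .
qed

lemma card_PiE_le_power:
  "finite W \<Longrightarrow> (\<And>w. w \<in> W \<Longrightarrow> card (S w) \<le> a) \<Longrightarrow> card (PiE W S) \<le> a ^ card W"
  using prod_mono[of W "\<lambda>w. card (S w)" "\<lambda>_. a"] by (simp add: card_PiE)

text \<open>Every noise pattern in \<open>A\<close> is supported on \<open>\<phi> ` W\<close> for some \<open>\<phi> \<in> PiE W S\<close>; there are at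
  most \<open>a ^ card W\<close> such \<open>\<phi>\<close>, and each \<open>\<phi> ` W\<close> has at least \<open>card W / b\<close> elements.\<close>
lemma local_stochastic_union_bound:
  fixes S :: "nat \<times> nat \<Rightarrow> (nat \<times> nat) set"
  assumes F: "local_stochastic D n p F" and p: "0 \<le> p" "p \<le> 1" and b: "0 < b"
    and W: "finite W"
    and S: "\<And>w. w \<in> W \<Longrightarrow> finite (S w) \<and> card (S w) \<le> a \<and> S w \<subseteq> {..<D} \<times> {..<n}"
    and fibre: "\<And>v. card {w\<in>W. v \<in> S w} \<le> b"
    and hit: "\<And>f w. f \<in> A \<Longrightarrow> w \<in> W \<Longrightarrow> \<exists>v\<in>S w. f v \<noteq> PI"
  shows "measure_pmf.prob F A \<le> (a * root b p) ^ card W"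
proof -
  let ?P = "PiE W S"
  have "A \<subseteq> (\<Union>\<phi>\<in>?P. {f. \<phi> ` W \<subseteq> supp f})"
  proof
    fix f assume "f \<in> A"
    then have "\<forall>w\<in>W. \<exists>v. v \<in> S w \<and> f v \<noteq> PI" using hit by blast
    from bchoice[OF this] obtain \<phi> where "\<forall>w\<in>W. \<phi> w \<in> S w \<and> f (\<phi> w) \<noteq> PI" by blast
    then have "restrict \<phi> W \<in> ?P" "restrict \<phi> W ` W \<subseteq> supp f" by (auto simp: supp_def)
    then show "f \<in> (\<Union>\<phi>\<in>?P. {f. \<phi> ` W \<subseteq> supp f})" by blast
  qed
  then have "measure_pmf.prob F A \<le> measure_pmf.prob F (\<Union>\<phi>\<in>?P. {f. \<phi> ` W \<subseteq> supp f})"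
    by (intro measure_pmf.finite_measure_mono) auto
  also have "\<dots> \<le> (\<Sum>\<phi>\<in>?P. measure_pmf.prob F {f. \<phi> ` W \<subseteq> supp f})"
    using W S by (intro measure_pmf.finite_measure_subadditive_finite finite_PiE) simp_all
  also have "\<dots> \<le> (\<Sum>\<phi>\<in>?P. root b p ^ card W)"
  proof (intro sum_mono)
    fix \<phi> assume "\<phi> \<in> ?P"
    then have \<phi>: "\<And>w. w \<in> W \<Longrightarrow> \<phi> w \<in> S w" by (simp add: PiE_iff)
    then have "\<phi> ` W \<subseteq> {..<D} \<times> {..<n}" using S by blast
    then have "measure_pmf.prob F {f. \<phi> ` W \<subseteq> supp f} \<le> p ^ card (\<phi> ` W)"
      using F unfolding local_stochastic_def by blast
    also have "\<dots> \<le> root b p ^ card W"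
      using p b card_le_mult_card_image[OF W \<phi> fibre] by (rule power_le_root_power)
    finally show "measure_pmf.prob F {f. \<phi> ` W \<subseteq> supp f} \<le> root b p ^ card W" .
  qed
  also have "\<dots> \<le> a ^ card W * root b p ^ card W"
  proof -
    have "real (card ?P) \<le> real a ^ card W"
      using card_PiE_le_power[of W S a] W S by (simp flip: of_nat_power)
    moreover have "0 \<le> root b p ^ card W" using p by (intro zero_le_power real_root_ge_zero)
    ultimately show ?thesis by (simp add: mult_right_mono)
  qed
  finally show ?thesis by (simp add: power_mult_distrib)
qed

lemma local_stochastic_pushed_noise:
  assumes C: "clifford_circuit n C" and p: "0 \<le> p" "p \<le> 1"
    and F: "local_stochastic (2 * length C) n p F"
  shows "local_stochastic (length C) n (3 * p powr (1/2)) (map_pmf (pushed_noise C) F)"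
  unfolding local_stochastic_def
proof (intro allI impI)
  fix W assume W: "W \<subseteq> {..<length C} \<times> {..<n}"
  then have "finite W" by (rule finite_subset) simp
  have "measure_pmf.prob F {f. W \<subseteq> supp (pushed_noise C f)} \<le> (real 3 * root 2 p) ^ card W"
  proof (rule local_stochastic_union_bound[OF F p _ \<open>finite W\<close>])
    show "\<And>w. w \<in> W \<Longrightarrow> finite (noise_sources C w) \<and> card (noise_sources C w) \<le> 3
        \<and> noise_sources C w \<subseteq> {..<2 * length C} \<times> {..<n}"
      using noise_sources_bounded[OF C] W by blast
    show "\<And>v. card {w\<in>W. v \<in> noise_sources C w} \<le> 2"
      by (rule noise_sources_fibre[OF C W])
    show "\<exists>v\<in>noise_sources C w. f v \<noteq> PI" if "f \<in> {f. W \<subseteq> supp (pushed_noise C f)}" "w \<in> W" for f w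
      using that W pushed_noise_support[of "fst w" C f "snd w" n] C
      by (force simp: supp_def clifford_circuit_def)
  qed simp
  then show "measure_pmf.prob (map_pmf (pushed_noise C) F) {f. W \<subseteq> supp f} \<le> (3 * p powr (1/2)) ^ card W"
    using p by (simp add: root_powr_inverse)
qed

theorem lemma5p2p6:
  fixes n :: nat and C :: circuit
  assumes "clifford_circuit n C"
  shows "\<exists>Ct. clifford_circuit n Ct \<and> length Ct = 2 * length C \<and>
           (\<forall>t < length Ct. (even t \<longrightarrow> prep_meas_layer (Ct ! t)) \<and>
                            (odd t \<longrightarrow> unitary_layer (Ct ! t))) \<and>
           simulates n Ct C"
proof (intro exI conjI allI impI)
  show "clifford_circuit n (split_layers C)"
    using assms by (rule clifford_circuit_split_layers)
  show "length (split_layers C) = 2 * length C"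
    by (rule length_split_layers)
  show "prep_meas_layer (split_layers C ! t)" if "t < length (split_layers C)" "even t" for t
    using that by (simp add: length_split_layers nth_split_layers prep_meas_layer_prep_meas_part)
  show "unitary_layer (split_layers C ! t)" if "t < length (split_layers C)" "odd t" for t
    using that by (simp add: length_split_layers nth_split_layers unitary_layer_unitary_part)
  have same_output: "map_pmf (noisy_sem n C) (map_pmf (pushed_noise C) F) = map_pmf (noisy_sem n (split_layers C)) F"
    for F
    using assms by (simp add: pmf.map_comp noisy_sem_split_layers)
  show "simulates n (split_layers C) C"
    unfolding simulates_def
  proof (rule exI[of _ 3], rule exI[of _ "1/2"], intro conjI allI impI)
    fix p :: real and F
    assume "0 \<le> p \<and> p \<le> 1" "local_stochastic (length (split_layers C)) n p F"
    then have "local_stochastic (length C) n (3 * p powr (1/2)) (map_pmf (pushed_noise C) F)"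
      using assms by (intro local_stochastic_pushed_noise) (auto simp: length_split_layers)
    with same_output show "\<exists>F'. local_stochastic (length C) n (3 * p powr (1/2)) F'
        \<and> map_pmf (noisy_sem n C) F' = map_pmf (noisy_sem n (split_layers C)) F"
      by blast
  qed simp_all
qed

end
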